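(* Let $\mathcal{H}$ be a complex Hilbert space and $B,C\in\mathcal{B}(\mathcal{H})$. Then $$w^2\left(\begin{bmatrix}0 & B\\ C & 0\end{bmatrix}\right)\ge \frac18\Big[\max\{\|B+C^*\|^2,\|B-C^*\|^2\}+\|B+C^*\|\,\|B-C^*\|\Big]\ge \frac14\max\left\{\big\||B|^2+|C^*|^2\big\|,\ \big\||B^*|^2+|C|^2\big\|\right\}.$$
   Context: $\mathcal{B}(\mathcal{H})$ is the algebra of bounded linear operators on $\mathcal{H}$ with operator norm $\|\cdot\|$. For $A\in\mathcal{B}(\mathcal{H})$, $A^*$ is the adjoint, $|A|=(A^*A)^{1/2}$, $|A^*|=(AA^* )^{1/2}$, and $w(A)=\sup_{\|x\|=1}|\langle Ax,x\rangle|$ is the numerical radius. The operator matrix $\begin{bmatrix}A&B\\C&D\end{bmatrix}$ acts on $\mathcal{H}\oplus\mathcal{H}$ by $(x_1,x_2)\mapsto(Ax_1+Bx_2,\,Cx_1+Dx_2)$; $0$ denotes the zero operator. *)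

theory Defs
  imports "HOL-Analysis.Analysis"
begin

class complex_vector = real_vector +
  fixes scaleC :: "complex \<Rightarrow> 'a \<Rightarrow> 'a" (infixr \<open>*\<^sub>C\<close> 75)
  assumes scaleC_add_right: "a *\<^sub>C (x + y) = a *\<^sub>C x + a *\<^sub>C y"
    and scaleC_add_left: "(a + b) *\<^sub>C x = a *\<^sub>C x + b *\<^sub>C x"
    and scaleC_scaleC: "a *\<^sub>C (b *\<^sub>C x) = (a * b) *\<^sub>C x"
    and scaleC_one: "1 *\<^sub>C x = x"
    and scaleR_scaleC: "scaleR r x = complex_of_real r *\<^sub>C x"

text \<open>Inner product: conjugate-linear in the first argument, linear in the second.\<close>
class complex_inner = complex_vector + real_normed_vector +
  fixes cinner :: "'a \<Rightarrow> 'a \<Rightarrow> complex"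
  assumes cinner_commute: "cinner x y = cnj (cinner y x)"
    and cinner_add_left: "cinner (x + y) z = cinner x z + cinner y z"
    and cinner_scaleC_left: "cinner (r *\<^sub>C x) y = cnj r * cinner x y"
    and cinner_ge_zero: "0 \<le> Re (cinner x x)"
    and cinner_eq_zero_iff: "cinner x x = 0 \<longleftrightarrow> x = 0"
    and norm_eq_sqrt_cinner: "norm x = sqrt (Re (cinner x x))"

class chilbert_space = complex_inner + complete_space

instantiation prod :: (complex_vector, complex_vector) complex_vector
begin
definition scaleC_prod_def: "a *\<^sub>C x = (a *\<^sub>C fst x, a *\<^sub>C snd x)"
instance
  by standard (auto simp: scaleC_prod_def scaleC_add_right scaleC_add_left scaleC_scaleC
      scaleC_one scaleR_prod_def scaleR_scaleC)
end

instantiation prod :: (complex_inner, complex_inner) complex_inner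
begin
definition cinner_prod_def: "cinner x y = cinner (fst x) (fst y) + cinner (snd x) (snd y)"
instance
proof
  fix x y z :: "'a \<times> 'b" and r :: complex
  show "cinner x y = cnj (cinner y x)"
    by (simp add: cinner_prod_def cinner_commute[of "fst x"] cinner_commute[of "snd x"])
  show "cinner (x + y) z = cinner x z + cinner y z"
    by (simp add: cinner_prod_def cinner_add_left)
  show "cinner (r *\<^sub>C x) y = cnj r * cinner x y"
    by (simp add: cinner_prod_def scaleC_prod_def cinner_scaleC_left distrib_left)
  show "0 \<le> Re (cinner x x)"
    by (simp add: cinner_prod_def cinner_ge_zero add_nonneg_nonneg)
  have n1: "Re (cinner (fst x) (fst x)) = (norm (fst x))\<^sup>2"
    by (simp add: norm_eq_sqrt_cinner cinner_ge_zero)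
  have n2: "Re (cinner (snd x) (snd x)) = (norm (snd x))\<^sup>2"
    by (simp add: norm_eq_sqrt_cinner cinner_ge_zero)
  have i1: "Im (cinner (fst x) (fst x)) = 0"
    using cinner_commute[of "fst x" "fst x"] by (metis cnj.simps(2) neg_equal_zero)
  have i2: "Im (cinner (snd x) (snd x)) = 0"
    using cinner_commute[of "snd x" "snd x"] by (metis cnj.simps(2) neg_equal_zero)
  show "cinner x x = 0 \<longleftrightarrow> x = 0"
  proof
    assume "cinner x x = 0"
    then have "Re (cinner x x) = 0" by simp
    then have "(norm (fst x))\<^sup>2 + (norm (snd x))\<^sup>2 = 0"
      by (simp add: cinner_prod_def n1 n2)
    then have "fst x = 0" "snd x = 0"
      by (simp_all add: add_nonneg_eq_0_iff)
    then show "x = 0" by (simp add: prod_eq_iff)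
  next
    assume "x = 0"
    moreover have "cinner (0::'a) 0 = 0" by (simp add: cinner_eq_zero_iff)
    moreover have "cinner (0::'b) 0 = 0" by (simp add: cinner_eq_zero_iff)
    ultimately show "cinner x x = 0"
      by (simp add: cinner_prod_def)
  qed
  show "norm x = sqrt (Re (cinner x x))"
    by (simp add: norm_prod_def cinner_prod_def n1 n2)
qed
end

definition clinear :: "('a::complex_vector \<Rightarrow> 'b::complex_vector) \<Rightarrow> bool" where
  "clinear f \<longleftrightarrow> (\<forall>x y. f (x + y) = f x + f y) \<and> (\<forall>c x. f (c *\<^sub>C x) = c *\<^sub>C f x)"

definition bounded_clinear :: "('a::complex_inner \<Rightarrow> 'b::complex_inner) \<Rightarrow> bool" where
  "bounded_clinear f \<longleftrightarrow> clinear f \<and> (\<exists>K. \<forall>x. norm (f x) \<le> norm x * K)"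

definition adj :: "('a::complex_inner \<Rightarrow> 'a) \<Rightarrow> ('a \<Rightarrow> 'a)" where
  "adj A = (THE B. \<forall>x y. cinner (A x) y = cinner x (B y))"

definition numrad :: "('a::complex_inner \<Rightarrow> 'a) \<Rightarrow> real" where
  "numrad T = (SUP x\<in>{x. norm x = 1}. cmod (cinner (T x) x))"

definition block_op :: "('a::complex_inner \<Rightarrow> 'a) \<Rightarrow> ('a \<Rightarrow> 'a) \<Rightarrow> ('a \<Rightarrow> 'a) \<Rightarrow> ('a \<Rightarrow> 'a)
    \<Rightarrow> ('a \<times> 'a \<Rightarrow> 'a \<times> 'a)" where
  "block_op A B C D = (\<lambda>(x1, x2). (A x1 + B x2, C x1 + D x2))"

end

theory Submission
  imports Defs
begin

(* Write A' for the adjoint and put S = B + C', D = B - C'. For the antidiagonal operator T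
   one finds Re <T(p,q),(p,q)> = Re <S q, p>, and replacing p by i p turns the imaginary part
   into Re <D q, p>. Testing with q = |S v| v and p = |v| S v gives |S|, |D| <= 2 w(T), which
   yields the first inequality. For the second, S'S + D'D = 2 (B'B + C C') and
   S S' + D D' = 2 (B B' + C'C), so both norms are at most (|S|^2 + |D|^2) / 2.
   The adjoint exists by the Riesz representation theorem, obtained from the element of
   minimal norm in the closed convex set {x. f x = 1}. *)

lemma cnj_cinner: "cnj (cinner y x) = cinner x (y::'a::complex_inner)"
  by (simp add: cinner_commute[of x y])

lemma cinner_zero_left [simp]: "cinner 0 (y::'a::complex_inner) = 0"
  using cinner_add_left[of "0::'a" 0 y] by simp

lemma cinner_zero_right [simp]: "cinner (x::'a::complex_inner) 0 = 0"
  using cnj_cinner[of 0 x] by simp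

lemma cinner_add_right: "cinner (x::'a::complex_inner) (y + z) = cinner x y + cinner x z"
  by (metis cinner_add_left cnj_cinner complex_cnj_add)

lemma cinner_minus_left: "cinner (- x) (y::'a::complex_inner) = - cinner x y"
  using cinner_add_left[of x "- x" y] by (simp add: eq_neg_iff_add_eq_0 add.commute)

lemma cinner_diff_left: "cinner (x - y) (z::'a::complex_inner) = cinner x z - cinner y z"
  by (simp only: cinner_add_left cinner_minus_left diff_conv_add_uminus)

lemma cinner_diff_right: "cinner (x::'a::complex_inner) (y - z) = cinner x y - cinner x z"
  by (metis cinner_diff_left cnj_cinner complex_cnj_diff)

lemma cinner_scaleC_right: "cinner (x::'a::complex_inner) (r *\<^sub>C y) = r * cinner x y"
  by (metis cinner_scaleC_left cnj_cinner complex_cnj_cnj complex_cnj_mult)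

lemma cinner_scaleR_left: "cinner (r *\<^sub>R x) (y::'a::complex_inner) = of_real r * cinner x y"
  by (simp add: scaleR_scaleC cinner_scaleC_left)

lemma cinner_scaleR_right: "cinner (x::'a::complex_inner) (r *\<^sub>R y) = of_real r * cinner x y"
  by (simp add: scaleR_scaleC cinner_scaleC_right)

lemma power2_norm_eq_Re_cinner: "(norm x)\<^sup>2 = Re (cinner x (x::'a::complex_inner))"
  by (simp add: norm_eq_sqrt_cinner cinner_ge_zero)

lemma cinner_self: "cinner x (x::'a::complex_inner) = of_real ((norm x)\<^sup>2)"
proof -
  have "Im (cinner x x) = 0"
    using arg_cong[OF cinner_commute[of x x], of Im] by simp
  then show ?thesis
    by (simp add: power2_norm_eq_Re_cinner complex_eq_iff)
qed

lemma Re_cinner_commute: "Re (cinner x (y::'a::complex_inner)) = Re (cinner y x)"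
  using arg_cong[OF cinner_commute[of x y], of Re] by simp

lemma power2_norm_add:
  "(norm (x + y))\<^sup>2 = (norm x)\<^sup>2 + (norm y)\<^sup>2 + 2 * Re (cinner x (y::'a::complex_inner))"
  unfolding power2_norm_eq_Re_cinner
  by (simp add: cinner_add_left cinner_add_right Re_cinner_commute[of y x])

lemma power2_norm_diff:
  "(norm (x - y))\<^sup>2 = (norm x)\<^sup>2 + (norm y)\<^sup>2 - 2 * Re (cinner x (y::'a::complex_inner))"
  unfolding power2_norm_eq_Re_cinner
  by (simp add: cinner_diff_left cinner_diff_right Re_cinner_commute[of y x])

lemma parallelogram_law:
  "(norm (x + y))\<^sup>2 + (norm (x - y))\<^sup>2 = 2 * (norm x)\<^sup>2 + 2 * (norm (y::'a::complex_inner))\<^sup>2"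
  unfolding power2_norm_add power2_norm_diff by simp

lemma cinner_add_diff_add:
  "cinner (u + v) (u' + v') + cinner (u - v) (u' - v')
     = 2 * (cinner u u' + cinner v (v'::'a::complex_inner))"
  by (simp add: cinner_add_left cinner_add_right cinner_diff_left cinner_diff_right algebra_simps)

lemma Re_cinner_le_norm: "Re (cinner x (y::'a::complex_inner)) \<le> norm x * norm y"
proof -
  let ?n = "norm x * norm y"
  have "0 \<le> (norm (norm y *\<^sub>R x - norm x *\<^sub>R y))\<^sup>2"
    by simp
  also have "\<dots> = 2 * ?n * ?n - 2 * ?n * Re (cinner x y)"
    unfolding power2_norm_diff
    by (simp add: cinner_scaleR_left cinner_scaleR_right power2_eq_square algebra_simps)
  finally have "?n * Re (cinner x y) \<le> ?n * ?n"
    by simp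
  moreover have "?n = 0 \<Longrightarrow> x = 0 \<or> y = 0"
    by simp
  ultimately show ?thesis
    by (cases "?n = 0") (auto simp: less_le mult_le_cancel_left)
qed

lemma norm_scaleC: "norm (c *\<^sub>C (x::'a::complex_inner)) = cmod c * norm x"
proof -
  have "(norm (c *\<^sub>C x))\<^sup>2 = (cmod c * norm x)\<^sup>2"
    unfolding power2_norm_eq_Re_cinner cinner_scaleC_left cinner_scaleC_right
    by (simp add: cinner_self power_mult_distrib complex_mult_cnj mult.assoc[symmetric] cmod_power2
        flip: of_real_mult)
  then show ?thesis
    by (simp add: power2_eq_iff_nonneg)
qed

lemma norm_cinner_le: "cmod (cinner x (y::'a::complex_inner)) \<le> norm x * norm y"
proof (cases "cinner x y = 0")
  case False
  let ?w = "cinner x y"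
  have "(cmod ?w)\<^sup>2 = Re (cinner x (cnj ?w *\<^sub>C y))"
    by (simp add: cinner_scaleC_right cmod_power2 flip: power2_eq_square)
  also have "\<dots> \<le> norm x * (cmod ?w * norm y)"
    using Re_cinner_le_norm[of x "cnj ?w *\<^sub>C y"] by (simp add: norm_scaleC)
  finally have "cmod ?w * cmod ?w \<le> cmod ?w * (norm x * norm y)"
    by (simp add: power2_eq_square algebra_simps)
  with False show ?thesis
    by simp
qed simp

lemma cinner_right_cancel: "(\<And>x. cinner x u = cinner x (v::'a::complex_inner)) \<Longrightarrow> u = v"
  by (metis cinner_diff_right cinner_eq_zero_iff eq_iff_diff_eq_0)

lemma bounded_linear_if_additive_scaleC:
  fixes f :: "'a::complex_inner \<Rightarrow> 'b::real_normed_vector"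
  assumes "\<And>x y. f (x + y) = f x + f y" and "\<And>r x. f (of_real r *\<^sub>C x) = r *\<^sub>R f x"
    and "\<And>x. norm (f x) \<le> norm x * K"
  shows "bounded_linear f"
  by (rule bounded_linear_intro[OF assms(1) _ assms(3)]) (simp add: scaleR_scaleC assms(2))

lemma minimizing_sequence_Cauchy:
  fixes X :: "nat \<Rightarrow> 'a::complex_inner"
  assumes "convex K" and "\<And>n. X n \<in> K" and lower: "\<And>x. x \<in> K \<Longrightarrow> d \<le> (norm x)\<^sup>2"
    and approx: "\<And>n. (norm (X n))\<^sup>2 < d + inverse (real (Suc n))"
  shows "Cauchy X"
proof (rule CauchyI)
  have dist_sq: "(norm (X m - X n))\<^sup>2 \<le> 2 * inverse (real (Suc m)) + 2 * inverse (real (Suc n))"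
    for m n
  proof -
    have "(1/2) *\<^sub>R X m + (1/2) *\<^sub>R X n \<in> K"
      by (rule convexD) (use assms in auto)
    then have "d \<le> (norm ((1/2) *\<^sub>R (X m + X n)))\<^sup>2"
      by (metis lower scaleR_right_distrib)
    then have "4 * d \<le> (norm (X m + X n))\<^sup>2"
      by (simp add: power2_eq_square)
    then show ?thesis
      using parallelogram_law[of "X m" "X n"] approx[of m] approx[of n] by linarith
  qed
  fix e :: real
  assume "0 < e"
  obtain M where M: "inverse (real (Suc M)) < e\<^sup>2 / 4"
    using reals_Archimedean[of "e\<^sup>2 / 4"] \<open>0 < e\<close> by auto
  have "norm (X m - X n) < e" if "M \<le> m" "M \<le> n" for m n
  proof -
    have "inverse (real (Suc m)) \<le> inverse (real (Suc M))"
      "inverse (real (Suc n)) \<le> inverse (real (Suc M))"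
      using that by (simp_all add: le_imp_inverse_le)
    then have "(norm (X m - X n))\<^sup>2 < e\<^sup>2"
      using dist_sq[of m n] M by linarith
    then show ?thesis
      using \<open>0 < e\<close> by (simp add: power_less_imp_less_base)
  qed
  then show "\<exists>M. \<forall>m\<ge>M. \<forall>n\<ge>M. norm (X m - X n) < e"
    by blast
qed

lemma exists_min_norm_closed_convex:
  fixes K :: "'a::chilbert_space set"
  assumes "closed K" and "convex K" and "K \<noteq> {}"
  shows "\<exists>z\<in>K. \<forall>x\<in>K. norm z \<le> norm x"
proof -
  define N where "N = (\<lambda>x. (norm x)\<^sup>2) ` K"
  define d where "d = Inf N"
  have "bdd_below N"
    unfolding N_def by (rule bdd_belowI[of _ 0]) auto
  then have lower: "d \<le> (norm x)\<^sup>2" if "x \<in> K" for x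
    unfolding d_def using that by (auto simp: N_def intro: cInf_lower)
  have "\<exists>x\<in>K. (norm x)\<^sup>2 < d + inverse (real (Suc n))" for n
    using cInf_lessD[of N "d + inverse (real (Suc n))"] \<open>K \<noteq> {}\<close> by (auto simp: N_def d_def)
  then obtain X where X: "\<And>n. X n \<in> K" and approx: "\<And>n. (norm (X n))\<^sup>2 < d + inverse (real (Suc n))"
    by metis
  have "Cauchy X"
    by (rule minimizing_sequence_Cauchy[OF \<open>convex K\<close> X lower approx])
  then obtain z where lim: "X \<longlonglongrightarrow> z"
    using Cauchy_convergent_iff convergent_def by blast
  have "z \<in> K"
    by (rule closed_sequentially[OF \<open>closed K\<close> X lim])
  have "(norm z)\<^sup>2 \<le> d"
  proof (rule LIMSEQ_le)
    show "(\<lambda>n. (norm (X n))\<^sup>2) \<longlonglongrightarrow> (norm z)\<^sup>2"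
      by (intro tendsto_intros lim)
    show "(\<lambda>n. d + inverse (real (Suc n))) \<longlonglongrightarrow> d"
      using tendsto_add[OF tendsto_const LIMSEQ_inverse_real_of_nat, of d] by simp
    show "\<exists>N. \<forall>n\<ge>N. (norm (X n))\<^sup>2 \<le> d + inverse (real (Suc n))"
      using approx less_imp_le by blast
  qed
  then have "norm z \<le> norm x" if "x \<in> K" for x
    using lower[OF that] by (simp add: power2_le_imp_le)
  with \<open>z \<in> K\<close> show ?thesis
    by blast
qed

lemma cinner_eq_0_if_norm_le_add_scaleC:
  fixes z w :: "'a::complex_inner"
  assumes min: "\<And>t. norm z \<le> norm (z + t *\<^sub>C w)"
  shows "cinner z w = 0"
proof -
  define c where "c = cinner z w"
  define s where "s = 1 / ((norm w)\<^sup>2 + 1)"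
  have "0 < s" and "s * (norm w)\<^sup>2 < 1"
    unfolding s_def by (simp_all add: add_nonneg_pos)
  \<comment> \<open>the step t = - s cnj c lowers the squared norm by s |c|^2 (2 - s |w|^2)\<close>
  define t where "t = - (of_real s * cnj c)"
  have "(norm z)\<^sup>2 \<le> (norm (z + t *\<^sub>C w))\<^sup>2"
    using min[of t] by (simp add: power_mono)
  also have "\<dots> = (norm z)\<^sup>2 + (cmod t)\<^sup>2 * (norm w)\<^sup>2 + 2 * Re (t * c)"
    unfolding power2_norm_add by (simp add: norm_scaleC power_mult_distrib cinner_scaleC_right c_def)
  also have "(cmod t)\<^sup>2 = s\<^sup>2 * (cmod c)\<^sup>2"
    unfolding t_def using \<open>0 < s\<close> by (simp add: norm_mult power_mult_distrib)
  also have "Re (t * c) = - s * (cmod c)\<^sup>2"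
    unfolding t_def cmod_power2 by (simp add: power2_eq_square algebra_simps)
  finally have "0 \<le> s * (cmod c)\<^sup>2 * (s * (norm w)\<^sup>2 - 2)"
    by (simp add: power2_eq_square algebra_simps)
  with \<open>0 < s\<close> \<open>s * (norm w)\<^sup>2 < 1\<close> show ?thesis
    by (auto simp: c_def zero_le_mult_iff mult_le_0_iff)
qed

lemma riesz_representation:
  fixes f :: "'a::chilbert_space \<Rightarrow> complex"
  assumes add: "\<And>x y. f (x + y) = f x + f y" and scale: "\<And>c x. f (c *\<^sub>C x) = c * f x"
    and bound: "\<And>x. cmod (f x) \<le> norm x * K"
  shows "\<exists>z. \<forall>x. f x = cinner z x"
proof (cases "\<forall>x. f x = 0")
  case False
  then obtain x1 where "f x1 \<noteq> 0"
    by auto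
  then have "f (inverse (f x1) *\<^sub>C x1) = 1"
    by (simp add: scale)
  interpret f: bounded_linear f
    by (rule bounded_linear_if_additive_scaleC[OF add _ bound]) (simp add: scale scaleR_conv_of_real)
  have "closed {x. f x = 1}"
    by (intro closed_Collect_eq f.continuous_on continuous_on_id continuous_on_const)
  moreover have "convex {x. f x = 1}"
    using convex_linear_vimage[OF f.linear convex_singleton[of 1]] by (simp add: vimage_def)
  moreover have "{x. f x = 1} \<noteq> {}"
    using \<open>f (inverse (f x1) *\<^sub>C x1) = 1\<close> by blast
  ultimately obtain z where "f z = 1" and min: "\<And>x. f x = 1 \<Longrightarrow> norm z \<le> norm x"
    by (metis (mono_tags) exists_min_norm_closed_convex mem_Collect_eq)
  have orth: "cinner z w = 0" if "f w = 0" for w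
    by (rule cinner_eq_0_if_norm_le_add_scaleC, rule min) (simp add: add scale that \<open>f z = 1\<close>)
  have "cinner z x = f x * of_real ((norm z)\<^sup>2)" for x
  proof -
    have "cinner z (x - f x *\<^sub>C z) = 0"
      by (rule orth) (simp add: f.diff scale \<open>f z = 1\<close>)
    then show ?thesis
      by (simp add: cinner_diff_right cinner_scaleC_right cinner_self)
  qed
  moreover have "z \<noteq> 0"
    using \<open>f z = 1\<close> by auto
  ultimately have "f x = cinner (inverse ((norm z)\<^sup>2) *\<^sub>R z) x" for x
    by (simp add: cinner_scaleR_left of_real_inverse)
  then show ?thesis
    by blast
qed (metis cinner_zero_left)

lemma bounded_clinear_additive: "bounded_clinear A \<Longrightarrow> A (x + y) = A x + A y"
  by (simp add: bounded_clinear_def clinear_def)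

lemma bounded_clinear_scaleC: "bounded_clinear A \<Longrightarrow> A (c *\<^sub>C x) = c *\<^sub>C A x"
  by (simp add: bounded_clinear_def clinear_def)

lemma bounded_clinear_imp_bounded_linear:
  fixes A :: "'a::complex_inner \<Rightarrow> 'b::complex_inner"
  assumes "bounded_clinear A"
  shows "bounded_linear A"
proof -
  obtain K where "\<And>x. norm (A x) \<le> norm x * K"
    using assms unfolding bounded_clinear_def by blast
  then show ?thesis
    by (rule bounded_linear_if_additive_scaleC[rotated 2])
      (simp_all add: assms bounded_clinear_additive bounded_clinear_scaleC scaleR_scaleC)
qed

lemma exists_adjoint:
  fixes A :: "'a::chilbert_space \<Rightarrow> 'a"
  assumes A: "bounded_clinear A"
  shows "\<exists>G. \<forall>x y. cinner (A x) y = cinner x (G y)"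
proof -
  obtain K where K: "\<And>x. norm (A x) \<le> norm x * K"
    using A unfolding bounded_clinear_def by blast
  have "\<exists>z. \<forall>x. cinner y (A x) = cinner z x" for y
  proof (rule riesz_representation)
    show "cinner y (A (x + x')) = cinner y (A x) + cinner y (A x')" for x x'
      by (simp add: bounded_clinear_additive[OF A] cinner_add_right)
    show "cinner y (A (c *\<^sub>C x)) = c * cinner y (A x)" for c x
      by (simp add: bounded_clinear_scaleC[OF A] cinner_scaleC_right)
    show "cmod (cinner y (A x)) \<le> norm x * (norm y * K)" for x
      using norm_cinner_le[of y "A x"] mult_left_mono[OF K[of x] norm_ge_zero[of y]]
      by (simp add: algebra_simps)
  qed
  then have "\<forall>y. \<exists>z. \<forall>x. cinner (A x) y = cinner x z"
    by (metis cnj_cinner)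
  then show ?thesis
    by metis
qed

lemma cinner_adj_right:
  fixes A :: "'a::chilbert_space \<Rightarrow> 'a"
  assumes A: "bounded_clinear A"
  shows "cinner (A x) y = cinner x (adj A y)"
proof -
  obtain G where G: "\<forall>x y. cinner (A x) y = cinner x (G y)"
    using exists_adjoint[OF A] by blast
  have "adj A = G"
    unfolding adj_def
  proof (rule the_equality)
    fix H
    assume "\<forall>x y. cinner (A x) y = cinner x (H y)"
    with G show "H = G"
      by (metis cinner_right_cancel ext)
  qed (fact G)
  with G show ?thesis
    by simp
qed

lemma cinner_adj_left:
  fixes A :: "'a::chilbert_space \<Rightarrow> 'a"
  assumes "bounded_clinear A"
  shows "cinner (adj A y) x = cinner y (A x)"
  by (metis assms cinner_adj_right cnj_cinner)

lemma norm_le_if_adjoint_norm_le: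
  fixes F G :: "'a::complex_inner \<Rightarrow> 'a"
  assumes FG: "\<And>u w. cinner (F u) w = cinner u (G w)"
    and G: "\<And>w. norm (G w) \<le> a * norm w" and "0 \<le> a"
  shows "norm (F u) \<le> a * norm u"
proof -
  have "(norm (F u))\<^sup>2 = Re (cinner u (G (F u)))"
    by (simp add: power2_norm_eq_Re_cinner FG)
  also have "\<dots> \<le> norm u * norm (G (F u))"
    by (rule Re_cinner_le_norm)
  also have "\<dots> \<le> norm u * (a * norm (F u))"
    by (intro mult_left_mono G norm_ge_zero)
  finally have "norm (F u) * norm (F u) \<le> norm (F u) * (a * norm u)"
    by (simp add: power2_eq_square algebra_simps)
  then show ?thesis
    using \<open>0 \<le> a\<close> by (cases "norm (F u) = 0") (auto simp: less_le mult_le_cancel_left)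
qed

lemma bounded_clinear_adj:
  fixes A :: "'a::chilbert_space \<Rightarrow> 'a"
  assumes A: "bounded_clinear A"
  shows "bounded_clinear (adj A)"
proof -
  obtain K where K: "\<And>x. norm (A x) \<le> \<bar>K\<bar> * norm x"
    using bounded_linear.pos_bounded[OF bounded_clinear_imp_bounded_linear[OF A]]
    by (metis abs_of_pos mult.commute)
  have "norm (adj A y) \<le> \<bar>K\<bar> * norm y" for y
    by (rule norm_le_if_adjoint_norm_le[where G=A]) (simp_all add: cinner_adj_left[OF A] K)
  moreover have "clinear (adj A)"
    unfolding clinear_def
    by (intro conjI allI; rule cinner_right_cancel)
      (simp_all add: cinner_adj_right[OF A, symmetric] cinner_add_right cinner_scaleC_right)
  ultimately show ?thesis
    unfolding bounded_clinear_def by (metis mult.commute)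
qed

lemma cmod_cinner_le_numrad:
  fixes T :: "'a::complex_inner \<Rightarrow> 'a"
  assumes T: "bounded_linear T"
  shows "cmod (cinner (T z) z) \<le> numrad T * (norm z)\<^sup>2"
proof (cases "z = 0")
  case False
  interpret T: bounded_linear T
    by (fact T)
  obtain K where K: "\<And>x. norm (T x) \<le> norm x * K"
    using T.bounded by blast
  have "cmod (cinner (T x) x) \<le> K" if "norm x = 1" for x
    using norm_cinner_le[of "T x" x] K[of x] that by simp
  then have bdd: "bdd_above ((\<lambda>x. cmod (cinner (T x) x)) ` {x. norm x = 1})"
    by (intro bdd_aboveI2[of _ _ K]) simp
  define u where "u = inverse (norm z) *\<^sub>R z"
  have "norm u = 1"
    using False by (simp add: u_def)
  then have "cmod (cinner (T u) u) \<le> numrad T"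
    unfolding numrad_def by (intro cSUP_upper bdd) simp
  moreover have "cinner (T u) u = of_real (inverse ((norm z)\<^sup>2)) * cinner (T z) z"
    by (simp add: u_def T.scaleR cinner_scaleR_left cinner_scaleR_right power2_eq_square)
  ultimately have "cmod (cinner (T z) z) / (norm z)\<^sup>2 \<le> numrad T"
    by (simp add: norm_mult norm_inverse norm_power divide_inverse mult.commute)
  then show ?thesis
    using False by (simp add: divide_le_eq)
qed simp

lemma cinner_antidiagonal_block:
  fixes B C :: "'a::chilbert_space \<Rightarrow> 'a"
  assumes "bounded_clinear C"
  shows "cinner (block_op (\<lambda>_. 0) B C (\<lambda>_. 0) (p, q)) (p, q) = cinner (B q) p + cinner p (adj C q)"
  by (simp add: block_op_def cinner_prod_def cinner_adj_right[OF assms])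

lemma bounded_linear_antidiagonal_block:
  assumes "bounded_linear B" and "bounded_linear C"
  shows "bounded_linear (block_op (\<lambda>_. 0) B C (\<lambda>_. 0))"
proof -
  have "block_op (\<lambda>_. 0) B C (\<lambda>_. 0) = (\<lambda>z. (B (snd z), C (fst z)))"
    by (simp add: block_op_def fun_eq_iff split: prod.split)
  moreover have "bounded_linear (\<lambda>z. (B (snd z), C (fst z)))"
    by (intro bounded_linear_Pair bounded_linear_compose[OF assms(1) bounded_linear_snd]
        bounded_linear_compose[OF assms(2) bounded_linear_fst])
  ultimately show ?thesis
    by simp
qed

lemma Re_cinner_add_adj_le_numrad:
  fixes B C :: "'a::chilbert_space \<Rightarrow> 'a"
  assumes "bounded_clinear B" and "bounded_clinear C"
  shows "Re (cinner (B q + adj C q) p)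
           \<le> numrad (block_op (\<lambda>_. 0) B C (\<lambda>_. 0)) * ((norm p)\<^sup>2 + (norm q)\<^sup>2)"
proof -
  let ?T = "block_op (\<lambda>_. 0) B C (\<lambda>_. 0)"
  have "Re (cinner (B q + adj C q) p) = Re (cinner (?T (p, q)) (p, q))"
    by (simp add: cinner_antidiagonal_block[OF assms(2)] cinner_add_left Re_cinner_commute[of p])
  also have "\<dots> \<le> numrad ?T * (norm (p, q))\<^sup>2"
    using complex_Re_le_cmod cmod_cinner_le_numrad order_trans
      bounded_linear_antidiagonal_block[OF assms[THEN bounded_clinear_imp_bounded_linear]]
    by blast
  finally show ?thesis
    by (simp add: norm_Pair)
qed

lemma Re_cinner_diff_adj_le_numrad:
  fixes B C :: "'a::chilbert_space \<Rightarrow> 'a"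
  assumes "bounded_clinear B" and "bounded_clinear C"
  shows "Re (cinner (B q - adj C q) p)
           \<le> numrad (block_op (\<lambda>_. 0) B C (\<lambda>_. 0)) * ((norm p)\<^sup>2 + (norm q)\<^sup>2)"
proof -
  let ?T = "block_op (\<lambda>_. 0) B C (\<lambda>_. 0)" and ?p = "\<i> *\<^sub>C p"
  have "Re (cinner (B q - adj C q) p) = Im (cinner (?T (?p, q)) (?p, q))"
    using cinner_commute[of ?p "adj C q"]
    by (simp add: cinner_antidiagonal_block[OF assms(2)] cinner_diff_left cinner_scaleC_right)
  also have "\<dots> \<le> numrad ?T * (norm (?p, q))\<^sup>2"
    using abs_Im_le_cmod abs_le_D1 cmod_cinner_le_numrad order_trans
      bounded_linear_antidiagonal_block[OF assms[THEN bounded_clinear_imp_bounded_linear]]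
    by blast
  finally show ?thesis
    by (simp add: norm_Pair norm_scaleC)
qed

lemma onorm_le_if_Re_cinner_le:
  fixes S :: "'a::complex_inner \<Rightarrow> 'a"
  assumes S: "bounded_linear S"
    and le: "\<And>p q. Re (cinner (S q) p) \<le> N * ((norm p)\<^sup>2 + (norm q)\<^sup>2)"
  shows "onorm S \<le> 2 * \<bar>N\<bar>"
proof (rule onorm_bound)
  interpret S: bounded_linear S
    by (fact S)
  fix v
  show "norm (S v) \<le> 2 * \<bar>N\<bar> * norm v"
  proof (cases "v = 0 \<or> S v = 0")
    case False
    \<comment> \<open>test with q = |S v| v and p = |v| S v, which balances the two squared norms\<close>
    have "norm v * norm (S v) * (norm (S v))\<^sup>2
            = Re (cinner (S (norm (S v) *\<^sub>R v)) (norm v *\<^sub>R S v))"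
      by (simp add: S.scaleR cinner_scaleR_left cinner_scaleR_right cinner_self)
    also have "\<dots> \<le> N * (norm v * norm (S v) * (2 * norm v * norm (S v)))"
      using le[where p = "norm v *\<^sub>R S v" and q = "norm (S v) *\<^sub>R v"] by (simp add: power_mult_distrib power2_eq_square algebra_simps)
    finally have "norm v * (norm (S v))\<^sup>2 * norm (S v)
                    \<le> norm v * (norm (S v))\<^sup>2 * (2 * N * norm v)"
      by (simp add: power2_eq_square algebra_simps)
    then have "norm (S v) \<le> 2 * N * norm v"
      using False by (simp add: mult_le_cancel_left)
    moreover have "2 * N * norm v \<le> 2 * \<bar>N\<bar> * norm v"
      by (simp add: mult_right_mono)
    ultimately show ?thesis
      by linarith
  qed auto
qed simp

lemma onorm_le_if_twice_cinner_eq: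
  fixes P S D :: "'a::complex_inner \<Rightarrow> 'a"
  assumes PSD: "\<And>x y. 2 * cinner (P x) y = cinner (S x) (S y) + cinner (D x) (D y)"
    and S: "\<And>u. norm (S u) \<le> a * norm u" and D: "\<And>u. norm (D u) \<le> b * norm u"
    and "0 \<le> a" and "0 \<le> b"
  shows "onorm P \<le> (a\<^sup>2 + b\<^sup>2) / 2"
proof (rule onorm_bound)
  fix x
  let ?y = "P x"
  have "2 * (norm ?y)\<^sup>2 = Re (cinner (S x) (S ?y)) + Re (cinner (D x) (D ?y))"
    using arg_cong[OF PSD[of x ?y], of Re] by (simp add: power2_norm_eq_Re_cinner)
  also have "\<dots> \<le> norm (S x) * norm (S ?y) + norm (D x) * norm (D ?y)"
    by (intro add_mono Re_cinner_le_norm)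
  also have "\<dots> \<le> (a * norm x) * (a * norm ?y) + (b * norm x) * (b * norm ?y)"
    by (intro add_mono mult_mono S D) (simp_all add: \<open>0 \<le> a\<close> \<open>0 \<le> b\<close>)
  finally have "norm ?y * (2 * norm ?y) \<le> norm ?y * ((a\<^sup>2 + b\<^sup>2) * norm x)"
    by (simp add: power2_eq_square algebra_simps)
  then show "norm ?y \<le> (a\<^sup>2 + b\<^sup>2) / 2 * norm x"
    using \<open>0 \<le> a\<close> \<open>0 \<le> b\<close> by (cases "norm ?y = 0") (auto simp: less_le mult_le_cancel_left)
qed (simp add: \<open>0 \<le> a\<close> \<open>0 \<le> b\<close>)

lemma onorm_abs_sq_add_le:
  fixes B C :: "'a::chilbert_space \<Rightarrow> 'a"
  assumes B: "bounded_clinear B" and C: "bounded_clinear C"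
  shows "onorm (\<lambda>x. adj B (B x) + C (adj C x))
           \<le> ((onorm (\<lambda>x. B x + adj C x))\<^sup>2 + (onorm (\<lambda>x. B x - adj C x))\<^sup>2) / 2"
proof (rule onorm_le_if_twice_cinner_eq)
  have "bounded_linear B" "bounded_linear (adj C)"
    using B C bounded_clinear_adj bounded_clinear_imp_bounded_linear by blast+
  then have S: "bounded_linear (\<lambda>x. B x + adj C x)" and D: "bounded_linear (\<lambda>x. B x - adj C x)"
    by (simp_all add: bounded_linear_add bounded_linear_sub)
  show "norm (B u + adj C u) \<le> onorm (\<lambda>x. B x + adj C x) * norm u" for u
    using onorm[OF S] by simp
  show "norm (B u - adj C u) \<le> onorm (\<lambda>x. B x - adj C x) * norm u" for u
    using onorm[OF D] by simp
  show "0 \<le> onorm (\<lambda>x. B x + adj C x)" "0 \<le> onorm (\<lambda>x. B x - adj C x)"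
    using S D by (simp_all add: onorm_pos_le)
  show "2 * cinner (adj B (B x) + C (adj C x)) y
          = cinner (B x + adj C x) (B y + adj C y) + cinner (B x - adj C x) (B y - adj C y)" for x y
    unfolding cinner_add_diff_add
    by (simp add: cinner_add_left cinner_adj_left[OF B] cinner_adj_right[OF C])
qed

lemma onorm_abs_adj_sq_add_le:
  fixes B C :: "'a::chilbert_space \<Rightarrow> 'a"
  assumes B: "bounded_clinear B" and C: "bounded_clinear C"
  shows "onorm (\<lambda>x. B (adj B x) + adj C (C x))
           \<le> ((onorm (\<lambda>x. B x + adj C x))\<^sup>2 + (onorm (\<lambda>x. B x - adj C x))\<^sup>2) / 2"
proof (rule onorm_le_if_twice_cinner_eq)
  have "bounded_linear B" "bounded_linear (adj C)"
    using B C bounded_clinear_adj bounded_clinear_imp_bounded_linear by blast+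
  then have S: "bounded_linear (\<lambda>x. B x + adj C x)" and D: "bounded_linear (\<lambda>x. B x - adj C x)"
    by (simp_all add: bounded_linear_add bounded_linear_sub)
  show "0 \<le> onorm (\<lambda>x. B x + adj C x)" "0 \<le> onorm (\<lambda>x. B x - adj C x)"
    using S D by (simp_all add: onorm_pos_le)
  show "norm (adj B u + C u) \<le> onorm (\<lambda>x. B x + adj C x) * norm u" for u
    by (rule norm_le_if_adjoint_norm_le[where G = "\<lambda>x. B x + adj C x"])
      (simp_all add: onorm[OF S] onorm_pos_le[OF S] cinner_add_left cinner_add_right
        cinner_adj_left[OF B] cinner_adj_right[OF C])
  show "norm (adj B u - C u) \<le> onorm (\<lambda>x. B x - adj C x) * norm u" for u
    by (rule norm_le_if_adjoint_norm_le[where G = "\<lambda>x. B x - adj C x"])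
      (simp_all add: onorm[OF D] onorm_pos_le[OF D] cinner_diff_left cinner_diff_right
        cinner_adj_left[OF B] cinner_adj_right[OF C])
  show "2 * cinner (B (adj B x) + adj C (C x)) y
          = cinner (adj B x + C x) (adj B y + C y) + cinner (adj B x - C x) (adj B y - C y)" for x y
    unfolding cinner_add_diff_add
    by (simp add: cinner_add_left cinner_adj_right[OF B] cinner_adj_left[OF C])
qed

lemma max_square_add_mult_bounds:
  fixes a b w p q :: real
  assumes "0 \<le> a" "0 \<le> b" "a \<le> 2 * \<bar>w\<bar>" "b \<le> 2 * \<bar>w\<bar>"
    and "p \<le> (a\<^sup>2 + b\<^sup>2) / 2" "q \<le> (a\<^sup>2 + b\<^sup>2) / 2"
  shows "w\<^sup>2 \<ge> 1/8 * (max (a\<^sup>2) (b\<^sup>2) + a * b)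
           \<and> 1/8 * (max (a\<^sup>2) (b\<^sup>2) + a * b) \<ge> 1/4 * max p q"
proof -
  have "a\<^sup>2 \<le> 4 * w\<^sup>2" "b\<^sup>2 \<le> 4 * w\<^sup>2" "a * b \<le> 4 * w\<^sup>2"
    using assms power_mono[of a "2 * \<bar>w\<bar>" 2] power_mono[of b "2 * \<bar>w\<bar>" 2]
      mult_mono[of a "2 * \<bar>w\<bar>" b "2 * \<bar>w\<bar>"]
    by (simp_all add: power_mult_distrib power2_eq_square)
  moreover have "a * a \<le> a * b \<or> b * b \<le> a * b"
    using assms(1,2) by (metis linorder_linear mult_left_mono mult_right_mono)
  then have "min (a\<^sup>2) (b\<^sup>2) \<le> a * b"
    by (auto simp: power2_eq_square min_def)
  ultimately show ?thesis
    using assms(5,6) by (auto simp: max_def min_def)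
qed

theorem mainTheorem6:
  fixes B C :: "'a::chilbert_space \<Rightarrow> 'a"
  assumes "bounded_clinear B" and "bounded_clinear C"
  shows "(numrad (block_op (\<lambda>_. 0) B C (\<lambda>_. 0)))\<^sup>2 \<ge>
           1/8 * (max ((onorm (\<lambda>x. B x + adj C x))\<^sup>2) ((onorm (\<lambda>x. B x - adj C x))\<^sup>2)
                  + onorm (\<lambda>x. B x + adj C x) * onorm (\<lambda>x. B x - adj C x))
       \<and> 1/8 * (max ((onorm (\<lambda>x. B x + adj C x))\<^sup>2) ((onorm (\<lambda>x. B x - adj C x))\<^sup>2)
                  + onorm (\<lambda>x. B x + adj C x) * onorm (\<lambda>x. B x - adj C x))
         \<ge> 1/4 * max (onorm (\<lambda>x. adj B (B x) + C (adj C x)))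
                      (onorm (\<lambda>x. B (adj B x) + adj C (C x)))"
proof -
  let ?w = "numrad (block_op (\<lambda>_. 0) B C (\<lambda>_. 0))"
  have "bounded_linear B" "bounded_linear (adj C)"
    using assms bounded_clinear_adj bounded_clinear_imp_bounded_linear by blast+
  then have S: "bounded_linear (\<lambda>x. B x + adj C x)" and D: "bounded_linear (\<lambda>x. B x - adj C x)"
    by (simp_all add: bounded_linear_add bounded_linear_sub)
  have "onorm (\<lambda>x. B x + adj C x) \<le> 2 * \<bar>?w\<bar>"
    by (rule onorm_le_if_Re_cinner_le[OF S Re_cinner_add_adj_le_numrad[OF assms]])
  moreover have "onorm (\<lambda>x. B x - adj C x) \<le> 2 * \<bar>?w\<bar>"
    by (rule onorm_le_if_Re_cinner_le[OF D Re_cinner_diff_adj_le_numrad[OF assms]])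
  ultimately show ?thesis
    by (rule max_square_add_mult_bounds[OF onorm_pos_le[OF S] onorm_pos_le[OF D] _ _
          onorm_abs_sq_add_le[OF assms] onorm_abs_adj_sq_add_le[OF assms]])
qed

end
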